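(* The graph $\mathcal{G}_3$ has finitely many connected components.
   Context: A square is a finite non-empty word of the form $XX$. A square reduction replaces a word $UXXV$ (with $X$ non-empty) by $UXV$. For $k\geqslant 1$, $\mathcal{G}_k$ is the undirected graph whose vertices are all finite non-empty words over a fixed $k$-letter alphabet, where two words $U,W$ are adjacent whenever one of them can be obtained from the other by a single square reduction. *)

theory Defs
  imports Main
begin

definition square_reduction :: "'a list \<Rightarrow> 'a list \<Rightarrow> bool" where
  "square_reduction W W' \<longleftrightarrow>
     (\<exists>U X V. X \<noteq> [] \<and> W = U @ X @ X @ V \<and> W' = U @ X @ V)"

text \<open>Vertices of G_k: all finite non-empty words (over the alphabet UNIV :: 'a set).\<close>
definition sq_vertices :: "'a list set" where
  "sq_vertices = {w. w \<noteq> []}"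

definition sq_adj :: "'a list \<Rightarrow> 'a list \<Rightarrow> bool" where
  "sq_adj U W \<longleftrightarrow> U \<in> sq_vertices \<and> W \<in> sq_vertices \<and>
     (square_reduction U W \<or> square_reduction W U)"

definition sq_connected :: "'a list \<Rightarrow> 'a list \<Rightarrow> bool" where
  "sq_connected U W \<longleftrightarrow> (U, W) \<in> {(x, y). sq_adj x y}\<^sup>*"

definition sq_components :: "'a list set set" where
  "sq_components = (\<lambda>w. {u. sq_connected w u}) ` sq_vertices"

end

theory Submission
  imports Defs
begin

text \<open>
  Connectivity in the square graph is the congruence on words generated by \<open>X X = X\<close>, i.e. the
  free band congruence, and the argument works over any finite alphabet. Let \<open>x\<close> be the shortest
  prefix of a word \<open>w\<close> containing all letters of \<open>w\<close>, and \<open>y\<close> the shortest such suffix. Then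
  \<open>w\<close> is connected to \<open>x y\<close>: if \<open>x\<close> and \<open>y\<close> overlap in \<open>w\<close>, then \<open>x y\<close> arises from \<open>w\<close> by
  doubling the overlap; otherwise \<open>w = x u y\<close>, and \<open>u\<close> can be removed because \<open>e u e\<close> is
  connected to \<open>e\<close> whenever every letter of \<open>u\<close> occurs in \<open>e\<close>. Now \<open>x = p a\<close> and \<open>y = b s\<close>
  where \<open>p\<close> and \<open>s\<close> use fewer letters than \<open>w\<close>, so induction on the number of letters shows
  that every word over \<open>k\<close> letters is connected to one of length at most \<open>2^(k+1) - 2\<close>.
\<close>

lemma square_reduction_nonempty:
  "square_reduction u v \<Longrightarrow> u \<noteq> [] \<and> v \<noteq> []"
  unfolding square_reduction_def by auto

lemma square_reduction_append_context:
  assumes "square_reduction u v"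
  shows "square_reduction (P @ u @ S) (P @ v @ S)"
proof -
  obtain U X V where "X \<noteq> []" "u = U @ X @ X @ V" "v = U @ X @ V"
    using assms unfolding square_reduction_def by blast
  then show ?thesis
    unfolding square_reduction_def by (intro exI[of _ "P @ U"] exI[of _ X] exI[of _ "V @ S"]) simp
qed

lemma sq_adj_append_context: "sq_adj u v \<Longrightarrow> sq_adj (P @ u @ S) (P @ v @ S)"
  unfolding sq_adj_def sq_vertices_def
  using square_reduction_append_context square_reduction_nonempty by blast

lemma sq_connected_refl: "sq_connected u u"
  unfolding sq_connected_def by simp

lemma sq_connected_trans [trans]:
  "sq_connected u v \<Longrightarrow> sq_connected v w \<Longrightarrow> sq_connected u w"
  unfolding sq_connected_def by (rule rtrancl_trans)

lemma sq_connected_sym: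
  assumes "sq_connected u v"
  shows "sq_connected v u"
proof -
  have "sym {(x, y). sq_adj x y}"
    unfolding sym_def sq_adj_def by blast
  with assms show ?thesis
    unfolding sq_connected_def by (meson sym_rtrancl symD)
qed

lemma sq_connected_append_context:
  "sq_connected u v \<Longrightarrow> sq_connected (P @ u @ S) (P @ v @ S)"
  unfolding sq_connected_def
proof (induction rule: rtrancl_induct)
  case base
  show ?case by simp
next
  case (step v w)
  then show ?case
    using sq_adj_append_context by (blast intro: rtrancl_into_rtrancl)
qed

lemma sq_connected_append_contextI:
  "sq_connected u v \<Longrightarrow> A = P @ u @ S \<Longrightarrow> B = P @ v @ S \<Longrightarrow> sq_connected A B"
  using sq_connected_append_context by blast

lemma sq_connected_square_reduction:
  "A = U @ X @ X @ V \<Longrightarrow> B = U @ X @ V \<Longrightarrow> sq_connected A B"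
proof (cases "X = []")
  case False
  assume "A = U @ X @ X @ V" "B = U @ X @ V"
  with False have "sq_adj A B"
    unfolding sq_adj_def sq_vertices_def square_reduction_def by blast
  then show ?thesis unfolding sq_connected_def by blast
qed (simp add: sq_connected_refl)

lemma sq_connected_square_expansion:
  "A = U @ X @ V \<Longrightarrow> B = U @ X @ X @ V \<Longrightarrow> sq_connected A B"
  using sq_connected_square_reduction sq_connected_sym by blast

lemma sq_connected_absorb_letter:
  assumes "a \<in> set e"
  shows "sq_connected (e @ [a] @ e) e"
proof -
  obtain p q where e: "e = p @ [a] @ q"
    using assms by (metis append_Cons append_Nil split_list)
  have "sq_connected (p @ [a] @ q @ [a] @ p @ [a] @ q) (p @ [a] @ p @ [a] @ q @ [a] @ p @ [a] @ q)"
    by (rule sq_connected_square_expansion[where U = "[]" and X = "p @ [a]"]) simp_all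
  also have "sq_connected \<dots> (p @ [a] @ p @ [a] @ q)"
    by (rule sq_connected_square_reduction[where U = p and X = "[a] @ p @ [a] @ q" and V = "[]"])
      simp_all
  also have "sq_connected \<dots> (p @ [a] @ q)"
    by (rule sq_connected_square_reduction[where U = "[]" and X = "p @ [a]"]) simp_all
  finally show ?thesis using e by simp
qed

lemma sq_connected_absorb_append:
  assumes f: "sq_connected (e @ f @ e) e" and g: "sq_connected (e @ g @ e) e"
  shows "sq_connected (e @ f @ g @ e) e"
proof -
  have "sq_connected (e @ f @ g @ e) (e @ f @ g @ e @ f @ e)"
    by (rule sq_connected_append_contextI[OF sq_connected_sym[OF f], where P = "e @ f @ g"]) simp_all
  also have "sq_connected \<dots> (e @ g @ e @ f @ g @ e @ f @ e)"
    by (rule sq_connected_append_contextI[OF sq_connected_sym[OF g], where P = "[]"]) simp_all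
  also have "sq_connected \<dots> (e @ g @ e @ f @ e)"
    by (rule sq_connected_square_reduction[where U = e and X = "g @ e @ f"]) simp_all
  also have "sq_connected \<dots> (e @ g @ e)"
    by (rule sq_connected_append_contextI[OF f, where P = "e @ g" and S = "[]"]) simp_all
  also have "sq_connected \<dots> e" by (rule g)
  finally show ?thesis .
qed

lemma sq_connected_absorb:
  "set u \<subseteq> set e \<Longrightarrow> sq_connected (e @ u @ e) e"
proof (induction u)
  case Nil
  show ?case by (rule sq_connected_square_reduction[where U = "[]" and X = e]) simp_all
next
  case (Cons a u)
  then have "sq_connected (e @ [a] @ e) e" and "sq_connected (e @ u @ e) e"
    using sq_connected_absorb_letter[of a e] by simp_all
  then show ?case
    using sq_connected_absorb_append by fastforce
qed

lemma sq_connected_drop_middle: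
  assumes "set z \<subseteq> set x" and "set x = set y"
  shows "sq_connected (x @ z @ y) (x @ y)"
proof -
  have x: "sq_connected x (x @ y @ x)" and y: "sq_connected y (y @ x @ y)"
    using sq_connected_absorb[of y x] sq_connected_absorb[of x y] assms(2)
    by (simp_all add: sq_connected_sym)
  have "sq_connected (x @ z @ y) ((x @ y @ x) @ z @ y)"
    by (rule sq_connected_append_contextI[OF x, where P = "[]"]) simp_all
  also have "sq_connected \<dots> ((x @ y) @ (x @ z @ y) @ (x @ y))"
    by (rule sq_connected_append_contextI[OF y, where P = "x @ y @ x @ z" and S = "[]"]) simp_all
  also have "sq_connected \<dots> (x @ y)"
    by (rule sq_connected_absorb) (use assms in auto)
  finally show ?thesis .
qed

lemma sq_connected_full_prefix_suffix:
  assumes "w = x @ m" and "w = m' @ y" and "set x = set w" and "set y = set w"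
  shows "sq_connected w (x @ y)"
proof -
  from assms(1,2) obtain us
    where "m' = x @ us \<and> us @ y = m \<or> m' @ us = x \<and> y = us @ m"
    by (metis append_eq_append_conv2)
  then show ?thesis
  proof
    assume "m' = x @ us \<and> us @ y = m"
    then have w: "w = x @ us @ y" using assms(1) by simp
    then have "set us \<subseteq> set x" using assms(3) by auto
    moreover have "set x = set y" using assms(3,4) by simp
    ultimately show ?thesis unfolding w by (rule sq_connected_drop_middle)
  next
    assume "m' @ us = x \<and> y = us @ m"
    then have "w = m' @ us @ m" and "x @ y = m' @ us @ us @ m" using assms(1) by auto
    then show ?thesis by (rule sq_connected_square_expansion)
  qed
qed

lemma shortest_full_prefix:
  "w \<noteq> [] \<Longrightarrow> \<exists>p a m. w = p @ [a] @ m \<and> set (p @ [a]) = set w \<and> set p \<subset> set w"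
proof (induction w rule: rev_induct)
  case Nil
  then show ?case by simp
next
  case (snoc c w)
  show ?case
  proof (cases "set w = set (w @ [c])")
    case True
    then have "w \<noteq> []" by auto
    with snoc.IH obtain p a m where "w = p @ [a] @ m" "set (p @ [a]) = set w" "set p \<subset> set w"
      by blast
    with True show ?thesis by (intro exI[of _ p] exI[of _ a] exI[of _ "m @ [c]"]) simp
  next
    case False
    then show ?thesis by (intro exI[of _ w] exI[of _ c] exI[of _ "[]"]) auto
  qed
qed

lemma shortest_full_suffix:
  assumes "w \<noteq> []"
  shows "\<exists>m b s. w = m @ [b] @ s \<and> set ([b] @ s) = set w \<and> set s \<subset> set w"
proof -
  from assms have "rev w \<noteq> []" by simp
  then obtain s b m where "rev w = s @ [b] @ m" "set (s @ [b]) = set (rev w)" "set s \<subset> set (rev w)"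
    using shortest_full_prefix by blast
  moreover from this(1) have "w = rev m @ [b] @ rev s"
    by (metis append.assoc rev_append rev_rev_ident rev_singleton_conv)
  ultimately show ?thesis
    by (intro exI[of _ "rev m"] exI[of _ b] exI[of _ "rev s"]) auto
qed

lemma sq_connected_short_word:
  "card (set w) \<le> n \<Longrightarrow> \<exists>w'. length w' + 2 \<le> 2 ^ Suc n \<and> sq_connected w w'"
proof (induction n arbitrary: w)
  case 0
  then show ?case using sq_connected_refl by auto
next
  case (Suc n)
  show ?case
  proof (cases "w = []")
    case True
    have "2 \<le> (2::nat) ^ Suc (Suc n)"
      using power_increasing[of 1 "Suc (Suc n)" "2::nat"] by simp
    then have "length w + 2 \<le> 2 ^ Suc (Suc n)"
      by (simp only: True list.size(3) add_0)
    with sq_connected_refl show ?thesis by blast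
  next
    case False
    obtain p a m where p: "w = p @ [a] @ m" "set (p @ [a]) = set w" "set p \<subset> set w"
      using shortest_full_prefix[OF False] by blast
    obtain m' b s where s: "w = m' @ [b] @ s" "set ([b] @ s) = set w" "set s \<subset> set w"
      using shortest_full_suffix[OF False] by blast
    have "card (set p) \<le> n" "card (set s) \<le> n"
      using psubset_card_mono[OF _ p(3)] psubset_card_mono[OF _ s(3)] Suc.prems by auto
    then obtain p' s' where p': "length p' + 2 \<le> 2 ^ Suc n" "sq_connected p p'"
      and s': "length s' + 2 \<le> 2 ^ Suc n" "sq_connected s s'"
      using Suc.IH by meson
    have "sq_connected w ((p @ [a]) @ ([b] @ s))"
      by (rule sq_connected_full_prefix_suffix[where m = m and m' = m']) (use p s in auto)
    also have "sq_connected \<dots> (p' @ [a, b] @ s)"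
      by (rule sq_connected_append_contextI[OF p'(2), where P = "[]"]) simp_all
    also have "sq_connected \<dots> (p' @ [a, b] @ s')"
      by (rule sq_connected_append_contextI[OF s'(2), where S = "[]"]) simp_all
    finally show ?thesis using p'(1) s'(1) by (intro exI[of _ "p' @ [a, b] @ s'"]) simp
  qed
qed

lemma finite_sq_components: "finite (sq_components :: 'a::finite list set set)"
proof -
  define N :: nat where "N = 2 ^ Suc (card (UNIV :: 'a set))"
  define short :: "'a list set" where "short = {w. set w \<subseteq> UNIV \<and> length w \<le> N}"
  have "sq_components \<subseteq> (\<lambda>w. {u. sq_connected w u}) ` short"
  proof
    fix C :: "'a list set"
    assume "C \<in> sq_components"
    then obtain w where C: "C = {u. sq_connected w u}"
      unfolding sq_components_def by blast
    have "card (set w) \<le> card (UNIV :: 'a set)"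
      by (rule card_mono) simp_all
    then obtain w' where w': "length w' + 2 \<le> N" "sq_connected w w'"
      using sq_connected_short_word unfolding N_def by blast
    have "sq_connected w u \<longleftrightarrow> sq_connected w' u" for u
      using w'(2) by (meson sq_connected_sym sq_connected_trans)
    then have "C = {u. sq_connected w' u}"
      unfolding C by blast
    moreover have "w' \<in> short"
      using w'(1) unfolding short_def by simp
    ultimately show "C \<in> (\<lambda>w. {u. sq_connected w u}) ` short"
      by blast
  qed
  moreover have "finite short"
    unfolding short_def by (rule finite_lists_length_le) simp
  ultimately show ?thesis
    by (meson finite_imageI finite_subset)
qed

theorem theorem2p10:
  assumes "card (UNIV :: ('a::finite) set) = 3"
  shows "finite (sq_components :: 'a list set set)"
  by (rule finite_sq_components)

end
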